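(* Let $\mathbb{K}$ be a field of characteristic $2$, let $(A,\cdot,\{-,-\},(-)^{\{2\}})$ be a unital restricted Poisson algebra, let $k\ge2$ and let $(\varphi,\omega)\in C^k_{\rm PA}(A)$. Let $\hat\varphi:\Omega^k(A)\to A$ be the unique $A$-linear map with $\hat\varphi(x\,\mathrm{d}u_1\wedge\cdots\wedge\mathrm{d}u_k)=x\varphi(u_1,\dots,u_k)$. Then there exists a unique map $\hat\omega:\Omega^1(A)\times\Omega^{k-2}(A)\to A$ such that $(\hat\varphi,\hat\omega)\in C^k_{\rm LR}(\Omega^1(A);A)$ and $\hat\omega(\mathrm{d}u,\mathrm{d}v_2\wedge\cdots\wedge\mathrm{d}v_{k-1})=\omega(u,v_2,\dots,v_{k-1})$ for all $u,v_2,\dots,v_{k-1}\in A$.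
   Context: $\mathbb{K}$ has characteristic $2$. Restricted Poisson algebra: commutative associative $(A,\cdot)$ (here with unit) with Lie bracket satisfying $\{ab,c\}=a\{b,c\}+b\{a,c\}$ and a map $(-)^{\{2\}}$ making $(A,\{,\})$ restricted ($(\lambda x)^{\{2\}}=\lambda^2x^{\{2\}}$, $\mathrm{ad}_{x^{\{2\}}}=\mathrm{ad}_x^2$, $(x+y)^{\{2\}}=x^{\{2\}}+y^{\{2\}}+\{x,y\}$), with $(xy)^{\{2\}}=x^2y^{\{2\}}+y^2x^{\{2\}}+xy\{x,y\}$. $\mathfrak{X}^k(A)$: alternating $k$-linear maps $A^k\to A$ that are derivations of $\cdot$ in each argument. $C^k_{\rm PA}(A)$ ($k\ge2$): pairs $(\varphi,\omega)$ with $\varphi\in\mathfrak{X}^k(A)$ and $\omega:A\times A^{k-2}\to A$ alternating multilinear in the last $k-2$ arguments, such that for $z=(z_2,..,z_{k-1})$: $\omega(\lambda x,z)=\lambda^2\omega(x,z)$, $\omega(x+y,z)=\omega(x,z)+\omega(y,z)+\varphi(x,y,z)$, $\omega(xy,z)=x^2\omega(y,z)+y^2\omega(x,z)+xy\varphi(x,y,z)$, $\omega(x,..,z_iz_i',..)=z_i\omega(x,..,z_i',..)+z_i'\omega(x,..,z_i,..)$. $\Omega^1(A)$: Kähler differentials ($A$-module generated by $\mathrm{d}x$ modulo $\mathrm{d}(xy)-x\mathrm{d}y-y\mathrm{d}x$, $\mathrm{d}(x+y)-\mathrm{d}x-\mathrm{d}y$, $\mathrm{d}\lambda$); $\Omega^k(A)=\wedge^k_A\Omega^1(A)$,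 $\Omega^0(A)=A$. $C^k_{\rm LR}(\Omega^1(A);A)$ ($k\ge2$): pairs $(\Phi,W)$ with $\Phi:\Omega^1(A)^k\to A$ alternating and $A$-multilinear (equivalently $A$-linear on $\Omega^k(A)$) and $W:\Omega^1(A)\times\Omega^1(A)^{k-2}\to A$ alternating and $A$-multilinear in its last $k-2$ arguments (so it may be viewed on $\Omega^1(A)\times\Omega^{k-2}(A)$), with $W(\lambda\alpha,\beta)=\lambda^2W(\alpha,\beta)$ ($\lambda\in\mathbb{K}$), $W(a\alpha,\beta)=a^2W(\alpha,\beta)$ ($a\in A$), and $W(\alpha+\alpha',\beta)=W(\alpha,\beta)+W(\alpha',\beta)+\Phi(\alpha,\alpha',\beta)$. *)

theory Defs
  imports Complex_Main
begin

definition unital_K_algebra :: "('k::field \<Rightarrow> 'a::comm_ring_1 \<Rightarrow> 'a) \<Rightarrow> bool" where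
  "unital_K_algebra scale \<longleftrightarrow>
     vector_space scale \<and> (\<forall>c a b. scale c (a * b) = scale c a * b)"

definition restricted_poisson ::
  "('k::field \<Rightarrow> 'a::comm_ring_1 \<Rightarrow> 'a) \<Rightarrow> ('a \<Rightarrow> 'a \<Rightarrow> 'a) \<Rightarrow> ('a \<Rightarrow> 'a) \<Rightarrow> bool" where
  "restricted_poisson scale br p2 \<longleftrightarrow>
     unital_K_algebra scale \<and>
     \<comment> \<open>K-bilinear Lie bracket\<close>
     (\<forall>x y z. br (x + y) z = br x z + br y z) \<and>
     (\<forall>x y z. br x (y + z) = br x y + br x z) \<and>
     (\<forall>c x y. br (scale c x) y = scale c (br x y)) \<and>
     (\<forall>c x y. br x (scale c y) = scale c (br x y)) \<and>
     (\<forall>x. br x x = 0) \<and>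
     (\<forall>x y z. br x (br y z) + br y (br z x) + br z (br x y) = 0) \<and>
     \<comment> \<open>Leibniz rule\<close>
     (\<forall>a b c. br (a * b) c = a * br b c + b * br a c) \<and>
     \<comment> \<open>restricted (2-map) structure\<close>
     (\<forall>c x. p2 (scale c x) = scale (c ^ 2) (p2 x)) \<and>
     (\<forall>x y. br (p2 x) y = br x (br x y)) \<and>
     (\<forall>x y. p2 (x + y) = p2 x + p2 y + br x y) \<and>
     \<comment> \<open>compatibility of the 2-map with the product\<close>
     (\<forall>x y. p2 (x * y) = x ^ 2 * p2 y + y ^ 2 * p2 x + x * y * br x y)"

text \<open>k-ary maps are represented as functions on lists; only lists of the
relevant length matter.\<close>

definition multider :: "('k::field \<Rightarrow> 'a::comm_ring_1 \<Rightarrow> 'a) \<Rightarrow> nat \<Rightarrow> ('a list \<Rightarrow> 'a) \<Rightarrow> bool" where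
  "multider scale k \<phi> \<longleftrightarrow>
     (\<forall>xs i x y. length xs = k \<longrightarrow> i < k \<longrightarrow>
        \<phi> (xs[i := x + y]) = \<phi> (xs[i := x]) + \<phi> (xs[i := y])) \<and>
     (\<forall>xs i c x. length xs = k \<longrightarrow> i < k \<longrightarrow>
        \<phi> (xs[i := scale c x]) = scale c (\<phi> (xs[i := x]))) \<and>
     (\<forall>xs i j. length xs = k \<longrightarrow> i < j \<longrightarrow> j < k \<longrightarrow> xs ! i = xs ! j \<longrightarrow> \<phi> xs = 0) \<and>
     (\<forall>xs i x y. length xs = k \<longrightarrow> i < k \<longrightarrow>
        \<phi> (xs[i := x * y]) = x * \<phi> (xs[i := y]) + y * \<phi> (xs[i := x]))"

definition C_PA ::
  "('k::field \<Rightarrow> 'a::comm_ring_1 \<Rightarrow> 'a) \<Rightarrow> nat \<Rightarrow> ('a list \<Rightarrow> 'a) \<Rightarrow> ('a \<Rightarrow> 'a list \<Rightarrow> 'a) \<Rightarrow> bool" where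
  "C_PA scale k \<phi> \<omega> \<longleftrightarrow>
     multider scale k \<phi> \<and>
     \<comment> \<open>alternating and K-multilinear in the last k-2 arguments\<close>
     (\<forall>x zs i u v. length zs = k - 2 \<longrightarrow> i < k - 2 \<longrightarrow>
        \<omega> x (zs[i := u + v]) = \<omega> x (zs[i := u]) + \<omega> x (zs[i := v])) \<and>
     (\<forall>x zs i c u. length zs = k - 2 \<longrightarrow> i < k - 2 \<longrightarrow>
        \<omega> x (zs[i := scale c u]) = scale c (\<omega> x (zs[i := u]))) \<and>
     (\<forall>x zs i j. length zs = k - 2 \<longrightarrow> i < j \<longrightarrow> j < k - 2 \<longrightarrow> zs ! i = zs ! j \<longrightarrow> \<omega> x zs = 0) \<and>
     \<comment> \<open>conditions in the first argument\<close>
     (\<forall>c x zs. length zs = k - 2 \<longrightarrow> \<omega> (scale c x) zs = scale (c ^ 2) (\<omega> x zs)) \<and>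
     (\<forall>x y zs. length zs = k - 2 \<longrightarrow> \<omega> (x + y) zs = \<omega> x zs + \<omega> y zs + \<phi> (x # y # zs)) \<and>
     (\<forall>x y zs. length zs = k - 2 \<longrightarrow>
        \<omega> (x * y) zs = x ^ 2 * \<omega> y zs + y ^ 2 * \<omega> x zs + x * y * \<phi> (x # y # zs)) \<and>
     \<comment> \<open>derivation in each of the last k-2 arguments\<close>
     (\<forall>x zs i u v. length zs = k - 2 \<longrightarrow> i < k - 2 \<longrightarrow>
        \<omega> x (zs[i := u * v]) = u * \<omega> x (zs[i := v]) + v * \<omega> x (zs[i := u]))"

text \<open>Omega^1(A) is the quotient of the free A-module on the symbols du (u in A),
modelled as finitely supported functions 'a => 'a (f u = coefficient of du),
by the submodule generated by d(xy) - x dy - y dx, d(x+y) - dx - dy and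
d(lambda 1).  Maps defined on Omega^1(A) are represented by maps on the free
module that are invariant under the quotient relation.\<close>

definition free_mod :: "('a \<Rightarrow> 'a::zero) set" where
  "free_mod = {f. finite {u. f u \<noteq> 0}}"

definition dgen :: "'a \<Rightarrow> 'a \<Rightarrow> 'a::{zero,one}" where
  "dgen u = (\<lambda>v. if v = u then 1 else 0)"

definition fadd :: "('a \<Rightarrow> 'a::plus) \<Rightarrow> ('a \<Rightarrow> 'a) \<Rightarrow> 'a \<Rightarrow> 'a" where
  "fadd f g = (\<lambda>v. f v + g v)"

definition fsub :: "('a \<Rightarrow> 'a::minus) \<Rightarrow> ('a \<Rightarrow> 'a) \<Rightarrow> 'a \<Rightarrow> 'a" where
  "fsub f g = (\<lambda>v. f v - g v)"

definition amul :: "'a::times \<Rightarrow> ('a \<Rightarrow> 'a) \<Rightarrow> 'a \<Rightarrow> 'a" where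
  "amul a f = (\<lambda>v. a * f v)"

definition kmul :: "('k \<Rightarrow> 'a \<Rightarrow> 'a) \<Rightarrow> 'k \<Rightarrow> ('a \<Rightarrow> 'a) \<Rightarrow> 'a \<Rightarrow> 'a" where
  "kmul scale c f = (\<lambda>v. scale c (f v))"

inductive_set kaehler_rel :: "('k \<Rightarrow> 'a::comm_ring_1 \<Rightarrow> 'a) \<Rightarrow> ('a \<Rightarrow> 'a) set"
  for scale :: "'k \<Rightarrow> 'a::comm_ring_1 \<Rightarrow> 'a" where
  zero: "(\<lambda>_. 0) \<in> kaehler_rel scale"
| mult: "fsub (fsub (dgen (x * y)) (amul x (dgen y))) (amul y (dgen x)) \<in> kaehler_rel scale"
| add: "fsub (fsub (dgen (x + y)) (dgen x)) (dgen y) \<in> kaehler_rel scale"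
| const: "dgen (scale c 1) \<in> kaehler_rel scale"
| sum: "f \<in> kaehler_rel scale \<Longrightarrow> g \<in> kaehler_rel scale \<Longrightarrow> fadd f g \<in> kaehler_rel scale"
| smul: "f \<in> kaehler_rel scale \<Longrightarrow> amul a f \<in> kaehler_rel scale"

definition kaehler_eq :: "('k \<Rightarrow> 'a::comm_ring_1 \<Rightarrow> 'a) \<Rightarrow> ('a \<Rightarrow> 'a) \<Rightarrow> ('a \<Rightarrow> 'a) \<Rightarrow> bool" where
  "kaehler_eq scale f g \<longleftrightarrow> fsub f g \<in> kaehler_rel scale"

definition lr_phi :: "('k::field \<Rightarrow> 'a::comm_ring_1 \<Rightarrow> 'a) \<Rightarrow> nat \<Rightarrow> (('a \<Rightarrow> 'a) list \<Rightarrow> 'a) \<Rightarrow> bool" where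
  "lr_phi scale k \<Phi> \<longleftrightarrow>
     (\<forall>as bs. length as = k \<longrightarrow> set as \<subseteq> free_mod \<longrightarrow> set bs \<subseteq> free_mod \<longrightarrow>
        list_all2 (kaehler_eq scale) as bs \<longrightarrow> \<Phi> as = \<Phi> bs) \<and>
     (\<forall>as i \<alpha> \<beta>. length as = k \<longrightarrow> set as \<subseteq> free_mod \<longrightarrow> i < k \<longrightarrow>
        \<alpha> \<in> free_mod \<longrightarrow> \<beta> \<in> free_mod \<longrightarrow>
        \<Phi> (as[i := fadd \<alpha> \<beta>]) = \<Phi> (as[i := \<alpha>]) + \<Phi> (as[i := \<beta>])) \<and>
     (\<forall>as i a \<alpha>. length as = k \<longrightarrow> set as \<subseteq> free_mod \<longrightarrow> i < k \<longrightarrow> \<alpha> \<in> free_mod \<longrightarrow>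
        \<Phi> (as[i := amul a \<alpha>]) = a * \<Phi> (as[i := \<alpha>])) \<and>
     (\<forall>as i j. length as = k \<longrightarrow> set as \<subseteq> free_mod \<longrightarrow> i < j \<longrightarrow> j < k \<longrightarrow>
        as ! i = as ! j \<longrightarrow> \<Phi> as = 0)"

definition C_LR ::
  "('k::field \<Rightarrow> 'a::comm_ring_1 \<Rightarrow> 'a) \<Rightarrow> nat \<Rightarrow> (('a \<Rightarrow> 'a) list \<Rightarrow> 'a)
     \<Rightarrow> (('a \<Rightarrow> 'a) \<Rightarrow> ('a \<Rightarrow> 'a) list \<Rightarrow> 'a) \<Rightarrow> bool" where
  "C_LR scale k \<Phi> W \<longleftrightarrow>
     lr_phi scale k \<Phi> \<and>
     \<comment> \<open>W is well defined on Omega^1(A) x Omega^1(A)^(k-2)\<close>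
     (\<forall>\<alpha> \<alpha>' bs bs'. \<alpha> \<in> free_mod \<longrightarrow> \<alpha>' \<in> free_mod \<longrightarrow> length bs = k - 2 \<longrightarrow>
        set bs \<subseteq> free_mod \<longrightarrow> set bs' \<subseteq> free_mod \<longrightarrow>
        kaehler_eq scale \<alpha> \<alpha>' \<longrightarrow> list_all2 (kaehler_eq scale) bs bs' \<longrightarrow>
        W \<alpha> bs = W \<alpha>' bs') \<and>
     \<comment> \<open>alternating and A-multilinear in the last k-2 arguments\<close>
     (\<forall>\<alpha> bs i \<beta> \<gamma>. \<alpha> \<in> free_mod \<longrightarrow> length bs = k - 2 \<longrightarrow> set bs \<subseteq> free_mod \<longrightarrow> i < k - 2 \<longrightarrow>
        \<beta> \<in> free_mod \<longrightarrow> \<gamma> \<in> free_mod \<longrightarrow>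
        W \<alpha> (bs[i := fadd \<beta> \<gamma>]) = W \<alpha> (bs[i := \<beta>]) + W \<alpha> (bs[i := \<gamma>])) \<and>
     (\<forall>\<alpha> bs i a \<beta>. \<alpha> \<in> free_mod \<longrightarrow> length bs = k - 2 \<longrightarrow> set bs \<subseteq> free_mod \<longrightarrow> i < k - 2 \<longrightarrow>
        \<beta> \<in> free_mod \<longrightarrow> W \<alpha> (bs[i := amul a \<beta>]) = a * W \<alpha> (bs[i := \<beta>])) \<and>
     (\<forall>\<alpha> bs i j. \<alpha> \<in> free_mod \<longrightarrow> length bs = k - 2 \<longrightarrow> set bs \<subseteq> free_mod \<longrightarrow>
        i < j \<longrightarrow> j < k - 2 \<longrightarrow> bs ! i = bs ! j \<longrightarrow> W \<alpha> bs = 0) \<and>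
     \<comment> \<open>conditions in the first argument\<close>
     (\<forall>c \<alpha> bs. \<alpha> \<in> free_mod \<longrightarrow> length bs = k - 2 \<longrightarrow> set bs \<subseteq> free_mod \<longrightarrow>
        W (kmul scale c \<alpha>) bs = scale (c ^ 2) (W \<alpha> bs)) \<and>
     (\<forall>a \<alpha> bs. \<alpha> \<in> free_mod \<longrightarrow> length bs = k - 2 \<longrightarrow> set bs \<subseteq> free_mod \<longrightarrow>
        W (amul a \<alpha>) bs = a ^ 2 * W \<alpha> bs) \<and>
     (\<forall>\<alpha> \<alpha>' bs. \<alpha> \<in> free_mod \<longrightarrow> \<alpha>' \<in> free_mod \<longrightarrow> length bs = k - 2 \<longrightarrow> set bs \<subseteq> free_mod \<longrightarrow>
        W (fadd \<alpha> \<alpha>') bs = W \<alpha> bs + W \<alpha>' bs + \<Phi> (\<alpha> # \<alpha>' # bs))"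

end

(*
  Write a 1-form as a finite sum alpha = sum_u a_u du in the free module on the symbols du.

  Uniqueness: whenever (Phi, W) is in C_LR, W is quadratic in alpha with polar form Phi, so
    W(a dt + alpha', beta) = a^2 W(dt, beta) + W(alpha', beta) + Phi(a dt, alpha', beta),
  and induction on the support reduces W to the values W(du, beta); these are A-multilinear in
  beta and hence determined by W(du, dv_2, ..., dv_{k-1}) = omega(u, v_2, ..., v_{k-1}).

  Existence: fix a strict linear order < on A and put
    W(sum_u a_u du, beta) = sum_u a_u^2 omega'(u, beta) + sum_{u < v} a_u a_v Phi(du, dv, beta),
  with omega'(u, -) the A-multilinear extension of omega(u, -).  Since 2 = 0 and Phi is
  alternating, Phi is symmetric and Phi(du, du) = 0 = 2 omega'(u, -), which makes W quadratic
  with polar form Phi.  The sum and product rules for omega in C_PA say that W takes the same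
  value on both sides of each defining relation of the Kaehler differentials, and this is what
  makes W vanish on the relations.
*)
theory Submission
  imports Defs
begin

section \<open>The free module on the symbols \<open>du\<close>\<close>

definition fsupp :: "('a \<Rightarrow> 'a::zero) \<Rightarrow> 'a set" where
  "fsupp f = {u. f u \<noteq> 0}"

lemma free_mod_iff_finite_fsupp: "f \<in> free_mod \<longleftrightarrow> finite (fsupp f)"
  by (simp add: free_mod_def fsupp_def)

lemma fsupp_dgen_subset: "fsupp (dgen u :: 'a \<Rightarrow> 'a::comm_ring_1) \<subseteq> {u}"
  by (auto simp: fsupp_def dgen_def)

lemma fsupp_fadd_subset: "fsupp (fadd f g) \<subseteq> fsupp f \<union> fsupp (g :: 'a \<Rightarrow> 'a::comm_ring_1)"
  by (auto simp: fsupp_def fadd_def)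

lemma fsupp_amul_subset: "fsupp (amul a f) \<subseteq> fsupp (f :: 'a \<Rightarrow> 'a::comm_ring_1)"
  by (auto simp: fsupp_def amul_def)

lemma zero_in_free_mod: "(\<lambda>_. 0 :: 'a::comm_ring_1) \<in> free_mod"
  by (simp add: free_mod_def)

lemma dgen_in_free_mod: "(dgen u :: 'a \<Rightarrow> 'a::comm_ring_1) \<in> free_mod"
  using finite_subset[OF fsupp_dgen_subset] by (simp add: free_mod_iff_finite_fsupp)

lemma fadd_in_free_mod:
  "f \<in> free_mod \<Longrightarrow> g \<in> free_mod \<Longrightarrow> fadd f (g :: 'a \<Rightarrow> 'a::comm_ring_1) \<in> free_mod"
  unfolding free_mod_iff_finite_fsupp by (rule finite_subset[OF fsupp_fadd_subset]) simp

lemma amul_in_free_mod: "f \<in> free_mod \<Longrightarrow> amul a (f :: 'a \<Rightarrow> 'a::comm_ring_1) \<in> free_mod"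
  using finite_subset[OF fsupp_amul_subset] by (simp add: free_mod_iff_finite_fsupp)

lemma fun_upd_zero_in_free_mod: "\<alpha> \<in> free_mod \<Longrightarrow> \<alpha>(t := 0 :: 'a::zero) \<in> free_mod"
  unfolding free_mod_iff_finite_fsupp by (rule finite_subset[of _ "fsupp \<alpha>"]) (auto simp: fsupp_def)

lemma fsub_eq_fadd_amul: "fsub f g = fadd f (amul (-1) (g :: 'a \<Rightarrow> 'a::comm_ring_1))"
  by (simp add: fsub_def fadd_def amul_def)

lemma fsub_in_free_mod:
  "f \<in> free_mod \<Longrightarrow> g \<in> free_mod \<Longrightarrow> fsub f (g :: 'a \<Rightarrow> 'a::comm_ring_1) \<in> free_mod"
  by (simp add: fsub_eq_fadd_amul fadd_in_free_mod amul_in_free_mod)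

lemma kaehler_rel_in_free_mod: "r \<in> kaehler_rel scale \<Longrightarrow> r \<in> free_mod"
  by (induction rule: kaehler_rel.induct)
     (auto intro!: fsub_in_free_mod fadd_in_free_mod amul_in_free_mod dgen_in_free_mod zero_in_free_mod)

lemma kaehler_eq_refl: "kaehler_eq scale f f"
  by (simp add: kaehler_eq_def fsub_def kaehler_rel.zero)

lemma amul_zero: "amul 0 f = (\<lambda>_. 0 :: 'a::comm_ring_1)"
  by (simp add: amul_def)

lemma fadd_fsub_cancel: "fadd g (fsub f g) = (f :: 'a \<Rightarrow> 'a::comm_ring_1)"
  by (simp add: fsub_def fadd_def)

lemma fadd_amul_dgen_update: "fadd (amul (f t) (dgen t)) (f(t := 0)) = (f :: 'a \<Rightarrow> 'a::comm_ring_1)"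
  by (auto simp: fadd_def amul_def dgen_def)

lemma free_mod_induct [consumes 1, case_names zero insert]:
  fixes \<alpha> :: "'a \<Rightarrow> 'a::comm_ring_1"
  assumes "\<alpha> \<in> free_mod"
    and zero: "P (\<lambda>_. 0)"
    and insert: "\<And>\<alpha> t. \<alpha> \<in> free_mod \<Longrightarrow> P (\<alpha>(t := 0)) \<Longrightarrow> P (fadd (amul (\<alpha> t) (dgen t)) (\<alpha>(t := 0)))"
  shows "P \<alpha>"
proof -
  have "P \<alpha>" if "finite T" "fsupp \<alpha> \<subseteq> T" for T \<alpha>
    using that
  proof (induction T arbitrary: \<alpha> rule: finite_induct)
    case empty
    then have "\<alpha> = (\<lambda>_. 0)" by (auto simp: fsupp_def)
    with zero show ?case by simp
  next
    case (insert t T)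
    have "\<alpha> \<in> free_mod"
      using insert finite_subset by (auto simp: free_mod_iff_finite_fsupp)
    moreover have "P (\<alpha>(t := 0))"
      using insert by (intro insert.IH) (auto simp: fsupp_def)
    ultimately show ?case using assms(3) fadd_amul_dgen_update[of \<alpha> t] by metis
  qed
  with assms(1) show ?thesis by (simp add: free_mod_iff_finite_fsupp)
qed

lemma sum_fsupp_superset:
  assumes "finite T" "fsupp b \<subseteq> T"
  shows "(\<Sum>v\<in>fsupp b. b v * g v) = (\<Sum>v\<in>T. (b v :: 'a::comm_ring_1) * g v)"
  by (rule sum.mono_neutral_left) (use assms in \<open>auto simp: fsupp_def\<close>)

lemma free_mod_linear_expand:
  fixes G :: "('a \<Rightarrow> 'a::comm_ring_1) \<Rightarrow> 'a"
  assumes add: "\<And>b c. b \<in> free_mod \<Longrightarrow> c \<in> free_mod \<Longrightarrow> G (fadd b c) = G b + G c"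
    and mult: "\<And>a b. b \<in> free_mod \<Longrightarrow> G (amul a b) = a * G b"
    and "\<alpha> \<in> free_mod"
  shows "G \<alpha> = (\<Sum>w\<in>fsupp \<alpha>. \<alpha> w * G (dgen w))"
  using \<open>\<alpha> \<in> free_mod\<close>
proof (induction rule: free_mod_induct)
  case zero
  then show ?case
    using mult[OF zero_in_free_mod, of 0] by (simp add: amul_zero fsupp_def)
next
  case (insert \<alpha> t)
  let ?\<alpha>' = "\<alpha>(t := 0)"
  have \<alpha>': "?\<alpha>' \<in> free_mod" by (rule fun_upd_zero_in_free_mod[OF insert.hyps])
  then have fin: "finite (fsupp ?\<alpha>')" by (simp add: free_mod_iff_finite_fsupp)
  have t: "t \<notin> fsupp ?\<alpha>'" by (simp add: fsupp_def)
  from \<alpha>' have "G \<alpha> = \<alpha> t * G (dgen t) + G ?\<alpha>'"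
    using add[OF amul_in_free_mod[OF dgen_in_free_mod]] mult[OF dgen_in_free_mod]
      fadd_amul_dgen_update[of \<alpha> t] by metis
  also have "G ?\<alpha>' = (\<Sum>w\<in>fsupp ?\<alpha>'. \<alpha> w * G (dgen w))"
    using insert.IH by (intro trans[OF insert.IH] sum.cong) (auto simp: fsupp_def)
  also have "\<alpha> t * G (dgen t) + \<dots> = (\<Sum>w\<in>insert t (fsupp ?\<alpha>'). \<alpha> w * G (dgen w))"
    using fin t by simp
  also have "\<dots> = (\<Sum>w\<in>fsupp \<alpha>. \<alpha> w * G (dgen w))"
    using fin by (intro sum_fsupp_superset[symmetric]) (auto simp: fsupp_def)
  finally show ?case by (simp add: fadd_amul_dgen_update)
qed

lemma free_mod_bilinear_expand:
  fixes G :: "('a \<Rightarrow> 'a::comm_ring_1) \<Rightarrow> ('a \<Rightarrow> 'a) \<Rightarrow> 'a"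
  assumes "\<And>b c d. b \<in> free_mod \<Longrightarrow> c \<in> free_mod \<Longrightarrow> d \<in> free_mod \<Longrightarrow>
      G (fadd b c) d = G b d + G c d"
    and "\<And>a b d. b \<in> free_mod \<Longrightarrow> d \<in> free_mod \<Longrightarrow> G (amul a b) d = a * G b d"
    and "\<And>b c d. b \<in> free_mod \<Longrightarrow> c \<in> free_mod \<Longrightarrow> d \<in> free_mod \<Longrightarrow>
      G d (fadd b c) = G d b + G d c"
    and "\<And>a b d. b \<in> free_mod \<Longrightarrow> d \<in> free_mod \<Longrightarrow> G d (amul a b) = a * G d b"
    and "\<alpha> \<in> free_mod" "\<beta> \<in> free_mod"
  shows "G \<alpha> \<beta> = (\<Sum>u\<in>fsupp \<alpha>. \<Sum>v\<in>fsupp \<beta>. \<alpha> u * \<beta> v * G (dgen u) (dgen v))"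
proof -
  have "G \<alpha> \<beta> = (\<Sum>u\<in>fsupp \<alpha>. \<alpha> u * G (dgen u) \<beta>)"
    by (rule free_mod_linear_expand[where G = "\<lambda>b. G b \<beta>"]) (use assms in auto)
  also have "\<dots> = (\<Sum>u\<in>fsupp \<alpha>. \<alpha> u * (\<Sum>v\<in>fsupp \<beta>. \<beta> v * G (dgen u) (dgen v)))"
    by (intro sum.cong refl arg_cong[where f = "(*) _"] free_mod_linear_expand)
       (use assms in \<open>auto simp: dgen_in_free_mod\<close>)
  finally show ?thesis by (simp add: sum_distrib_left mult.assoc)
qed

section \<open>Multilinear extension from the generators\<close>

fun multilin_ext :: "('a::comm_ring_1 list \<Rightarrow> 'a) \<Rightarrow> ('a \<Rightarrow> 'a) list \<Rightarrow> 'a" where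
  "multilin_ext \<psi> [] = \<psi> []"
| "multilin_ext \<psi> (b # bs) = (\<Sum>v\<in>fsupp b. b v * multilin_ext (\<lambda>vs. \<psi> (v # vs)) bs)"

lemma multilin_ext_Cons_superset:
  "finite T \<Longrightarrow> fsupp b \<subseteq> T \<Longrightarrow>
   multilin_ext \<psi> (b # bs) = (\<Sum>v\<in>T. b v * multilin_ext (\<lambda>vs. \<psi> (v # vs)) bs)"
  by (simp add: sum_fsupp_superset)

lemma multilin_ext_cong:
  "(\<And>vs. length vs = length bs \<Longrightarrow> \<psi> vs = \<psi>' vs) \<Longrightarrow> multilin_ext \<psi> bs = multilin_ext \<psi>' bs"
proof (induction bs arbitrary: \<psi> \<psi>')
  case (Cons b bs)
  show ?case
    by (simp, intro sum.cong refl arg_cong[where f = "(*) _"] Cons.IH) (simp add: Cons.prems)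
qed simp

lemma multilin_ext_add_fun:
  "multilin_ext (\<lambda>vs. f vs + g vs) bs = multilin_ext f bs + multilin_ext g bs"
  by (induction bs arbitrary: f g) (simp_all add: distrib_left sum.distrib)

lemma multilin_ext_mult_fun: "multilin_ext (\<lambda>vs. a * f vs) bs = a * multilin_ext f bs"
  by (induction bs arbitrary: f) (simp_all add: sum_distrib_left mult.left_commute)

lemma multilin_ext_zero_fun: "multilin_ext (\<lambda>vs. 0) bs = 0"
  using multilin_ext_mult_fun[of 0 "\<lambda>_. 0" bs] by simp

lemma multilin_ext_Cons_fadd:
  assumes "b \<in> free_mod" "c \<in> free_mod"
  shows "multilin_ext \<psi> (fadd b c # bs) = multilin_ext \<psi> (b # bs) + multilin_ext \<psi> (c # bs)"
proof -
  let ?T = "fsupp b \<union> fsupp c"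
  have T: "finite ?T" using assms by (simp add: free_mod_iff_finite_fsupp)
  show ?thesis
    using multilin_ext_Cons_superset[OF T fsupp_fadd_subset[of b c], of \<psi> bs]
      multilin_ext_Cons_superset[OF T, of b \<psi> bs] multilin_ext_Cons_superset[OF T, of c \<psi> bs]
    by (simp del: multilin_ext.simps add: fadd_def distrib_right sum.distrib)
qed

lemma multilin_ext_Cons_amul:
  assumes "b \<in> free_mod"
  shows "multilin_ext \<psi> (amul a b # bs) = a * multilin_ext \<psi> (b # bs)"
proof -
  have T: "finite (fsupp b)" using assms by (simp add: free_mod_iff_finite_fsupp)
  have "multilin_ext \<psi> (amul a b # bs)
      = (\<Sum>v\<in>fsupp b. amul a b v * multilin_ext (\<lambda>vs. \<psi> (v # vs)) bs)"
    by (rule multilin_ext_Cons_superset[OF T fsupp_amul_subset])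
  then show ?thesis by (simp add: amul_def sum_distrib_left mult.assoc)
qed

lemma multilin_ext_fadd:
  "i < length bs \<Longrightarrow> b \<in> free_mod \<Longrightarrow> c \<in> free_mod \<Longrightarrow>
   multilin_ext \<psi> (bs[i := fadd b c]) = multilin_ext \<psi> (bs[i := b]) + multilin_ext \<psi> (bs[i := c])"
proof (induction bs arbitrary: \<psi> i)
  case (Cons b0 bs)
  then show ?case
    using multilin_ext_Cons_fadd[of b c \<psi> bs]
    by (cases i) (simp_all add: distrib_left sum.distrib)
qed simp

lemma multilin_ext_amul:
  "i < length bs \<Longrightarrow> b \<in> free_mod \<Longrightarrow>
   multilin_ext \<psi> (bs[i := amul a b]) = a * multilin_ext \<psi> (bs[i := b])"
proof (induction bs arbitrary: \<psi> i)
  case (Cons b0 bs)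
  then show ?case
    using multilin_ext_Cons_amul[of b \<psi> a bs]
    by (cases i) (simp_all add: sum_distrib_left mult.left_commute)
qed simp

lemma multilin_ext_dgen_Cons: "multilin_ext \<psi> (dgen u # bs) = multilin_ext (\<lambda>vs. \<psi> (u # vs)) bs"
  using multilin_ext_Cons_superset[of "{u}" "dgen u" \<psi> bs] fsupp_dgen_subset[of u]
  by (simp add: dgen_def)

lemma multilin_ext_map_dgen: "multilin_ext \<psi> (map dgen vs) = \<psi> vs"
  by (induction vs arbitrary: \<psi>) (simp_all del: multilin_ext.simps(2) add: multilin_ext_dgen_Cons)

lemma multilin_ext_update_dgen:
  "i < length bs \<Longrightarrow>
   multilin_ext \<psi> (bs[i := dgen u]) = multilin_ext (\<lambda>vs. \<psi> (vs[i := u])) (bs[i := dgen z])"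
proof (induction bs arbitrary: \<psi> i)
  case (Cons b bs)
  then show ?case
    by (cases i) (simp_all del: multilin_ext.simps(2) add: multilin_ext_dgen_Cons, simp)
qed simp

lemma multilin_ext_update2_dgen:
  assumes "i < j" "j < length bs"
  shows "multilin_ext \<psi> (bs[j := dgen w, i := dgen v])
    = multilin_ext (\<lambda>vs. \<psi> (vs[i := v, j := w])) (bs[i := dgen 0, j := dgen 0])"
proof -
  have swap: "xs[i := x, j := y] = xs[j := y, i := x]" for xs :: "'b list" and x y
    using assms by (simp add: list_update_swap)
  have "multilin_ext \<psi> (bs[j := dgen w, i := dgen v])
      = multilin_ext (\<lambda>vs. \<psi> (vs[i := v])) (bs[j := dgen w, i := dgen 0])"
    by (rule multilin_ext_update_dgen) (use assms in simp)
  also have "\<dots> = multilin_ext (\<lambda>vs. \<psi> (vs[i := v])) (bs[i := dgen 0, j := dgen w])"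
    by (simp only: swap)
  also have "\<dots> = multilin_ext (\<lambda>vs. \<psi> (vs[j := w, i := v])) (bs[i := dgen 0, j := dgen 0])"
    by (rule multilin_ext_update_dgen) (use assms in simp)
  finally show ?thesis by (simp only: swap)
qed

definition free_multilinear :: "nat \<Rightarrow> (('a \<Rightarrow> 'a::comm_ring_1) list \<Rightarrow> 'a) \<Rightarrow> bool" where
  "free_multilinear n F \<longleftrightarrow>
    (\<forall>bs i b c. length bs = n \<longrightarrow> set bs \<subseteq> free_mod \<longrightarrow> i < n \<longrightarrow> b \<in> free_mod \<longrightarrow> c \<in> free_mod \<longrightarrow>
       F (bs[i := fadd b c]) = F (bs[i := b]) + F (bs[i := c])) \<and>
    (\<forall>bs i a b. length bs = n \<longrightarrow> set bs \<subseteq> free_mod \<longrightarrow> i < n \<longrightarrow> b \<in> free_mod \<longrightarrow>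
       F (bs[i := amul a b]) = a * F (bs[i := b]))"

lemma free_multilinear_Cons:
  assumes "free_multilinear (Suc n) F" "w \<in> free_mod"
  shows "free_multilinear n (\<lambda>cs. F (w # cs))"
  using assms unfolding free_multilinear_def
  by (metis (no_types, lifting) Suc_less_eq insert_subset length_Cons list.set(2) list_update_code(3))

lemma free_multilinear_eq_multilin_ext:
  "free_multilinear (length bs) F \<Longrightarrow> set bs \<subseteq> free_mod \<Longrightarrow>
   F bs = multilin_ext (\<lambda>vs. F (map dgen vs)) bs"
proof (induction bs arbitrary: F)
  case (Cons b bs)
  have "F (b # bs) = (\<Sum>w\<in>fsupp b. b w * F (dgen w # bs))"
  proof (rule free_mod_linear_expand[where G = "\<lambda>c. F (c # bs)"])
    show "F (fadd c d # bs) = F (c # bs) + F (d # bs)" if "c \<in> free_mod" "d \<in> free_mod" for c d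
      using that Cons.prems unfolding free_multilinear_def
      by (metis length_greater_0_conv list.discI list_update_code(2))
    show "F (amul a c # bs) = a * F (c # bs)" if "c \<in> free_mod" for a c
      using that Cons.prems unfolding free_multilinear_def
      by (metis length_greater_0_conv list.discI list_update_code(2))
  qed (use Cons.prems in simp)
  also have "\<dots> = (\<Sum>w\<in>fsupp b. b w * multilin_ext (\<lambda>vs. F (dgen w # map dgen vs)) bs)"
    using Cons.prems Cons.IH[OF free_multilinear_Cons[OF _ dgen_in_free_mod]] by simp
  finally show ?case by simp
qed simp

lemma multiderD:
  assumes "multider scale n \<psi>" "length xs = n" "i < n"
  shows multider_add: "\<psi> (xs[i := x + y]) = \<psi> (xs[i := x]) + \<psi> (xs[i := y])"
    and multider_scale: "\<psi> (xs[i := scale c x]) = scale c (\<psi> (xs[i := x]))"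
    and multider_mult: "\<psi> (xs[i := x * y]) = x * \<psi> (xs[i := y]) + y * \<psi> (xs[i := x])"
  using assms unfolding multider_def by simp_all

lemma multider_alternating:
  "multider scale n \<psi> \<Longrightarrow> length xs = n \<Longrightarrow> i < j \<Longrightarrow> j < n \<Longrightarrow> xs ! i = xs ! j \<Longrightarrow> \<psi> xs = 0"
  unfolding multider_def by blast

lemma multider_Cons:
  fixes \<psi> :: "'a::comm_ring_1 list \<Rightarrow> 'a"
  assumes "multider scale (Suc n) \<psi>"
  shows "multider scale n (\<lambda>vs. \<psi> (v # vs))"
  unfolding multider_def
proof (intro conjI allI impI)
  fix xs :: "'a list" and i x y c
  assume "length xs = n" "i < n"
  then show "\<psi> (v # xs[i := x + y]) = \<psi> (v # xs[i := x]) + \<psi> (v # xs[i := y])"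
    and "\<psi> (v # xs[i := scale c x]) = scale c (\<psi> (v # xs[i := x]))"
    and "\<psi> (v # xs[i := x * y]) = x * \<psi> (v # xs[i := y]) + y * \<psi> (v # xs[i := x])"
    using multiderD[OF assms, of "v # xs" "Suc i"] by simp_all
next
  fix xs :: "'a list" and i j
  assume "length xs = n" "i < j" "j < n" "xs ! i = xs ! j"
  then show "\<psi> (v # xs) = 0"
    by (intro multider_alternating[OF assms, of _ "Suc i" "Suc j"]) simp_all
qed

lemma multider_one: "multider scale n \<psi> \<Longrightarrow> length xs = n \<Longrightarrow> i < n \<Longrightarrow> \<psi> (xs[i := 1]) = 0"
  using multider_mult[of scale n \<psi> xs i 1 1] by simp

lemma multider_scalar:
  assumes "vector_space scale" "multider scale n \<psi>" "length xs = n" "i < n"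
  shows "\<psi> (xs[i := scale c 1]) = 0"
  using assms vector_space.vector_space_assms(1)[OF assms(1), of c 0 0]
  by (simp add: multider_scale multider_one)

lemma multider_antisym:
  assumes "multider scale n \<psi>" "length xs = n" "i < j" "j < n"
  shows "\<psi> (xs[i := x, j := y]) + \<psi> (xs[i := y, j := x]) = 0"
proof -
  define P where "P a b = \<psi> (xs[i := a, j := b])" for a b
  have swap: "xs[i := a, j := b] = xs[j := b, i := a]" for a b
    using assms(3) by (simp add: list_update_swap)
  have add1: "P (a + a') b = P a b + P a' b" for a a' b
    using assms unfolding P_def swap by (simp add: multider_add)
  have add2: "P a (b + b') = P a b + P a b'" for a b b'
    using assms unfolding P_def by (simp add: multider_add)
  have diag: "P a a = 0" for a
    using assms unfolding P_def by (intro multider_alternating[of scale n _ _ i j]) simp_all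
  have "0 = P (x + y) (x + y)" using diag by simp
  also have "\<dots> = P x y + P y x" by (simp only: add1 add2) (simp add: diag)
  finally show ?thesis unfolding P_def by (rule sym)
qed

lemma kaehler_rel_kernel:
  fixes G :: "('a \<Rightarrow> 'a::comm_ring_1) \<Rightarrow> 'a"
  assumes G_fadd: "\<And>b c. b \<in> free_mod \<Longrightarrow> c \<in> free_mod \<Longrightarrow> G (fadd b c) = G b + G c"
    and G_amul: "\<And>a b. b \<in> free_mod \<Longrightarrow> G (amul a b) = a * G b"
    and G_dgen_mult: "\<And>x y. G (dgen (x * y)) = x * G (dgen y) + y * G (dgen x)"
    and G_dgen_add: "\<And>x y. G (dgen (x + y)) = G (dgen x) + G (dgen y)"
    and G_dgen_scalar: "\<And>c. G (dgen (scale c 1)) = 0"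
    and "r \<in> kaehler_rel scale"
  shows "G r = 0"
proof -
  have G_fsub: "G (fsub b c) = G b - G c" if "b \<in> free_mod" "c \<in> free_mod" for b c
    using that by (simp add: fsub_eq_fadd_amul G_fadd G_amul amul_in_free_mod)
  note free = fsub_in_free_mod amul_in_free_mod dgen_in_free_mod kaehler_rel_in_free_mod
  show ?thesis
    using \<open>r \<in> kaehler_rel scale\<close>
  proof (induction rule: kaehler_rel.induct)
    case zero
    show ?case using G_amul[OF zero_in_free_mod, of 0] by (simp add: amul_zero)
  next
    case (mult x y)
    show ?case by (simp add: G_fsub G_amul G_dgen_mult free)
  next
    case (add x y)
    show ?case by (simp add: G_fsub G_dgen_add free)
  next
    case (const c)
    show ?case by (rule G_dgen_scalar)
  next
    case (sum f g)
    then show ?case by (simp add: G_fadd free)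
  next
    case (smul f a)
    then show ?case by (simp add: G_amul free)
  qed
qed

lemma multilin_ext_Cons_kaehler_rel:
  assumes vs: "vector_space scale" and der: "multider scale (Suc (length bs)) \<psi>"
    and "\<rho> \<in> kaehler_rel scale"
  shows "multilin_ext \<psi> (\<rho> # bs) = 0"
proof (rule kaehler_rel_kernel[where G = "\<lambda>c. multilin_ext \<psi> (c # bs)", OF _ _ _ _ _ assms(3)])
  show "multilin_ext \<psi> (fadd c d # bs) = multilin_ext \<psi> (c # bs) + multilin_ext \<psi> (d # bs)"
    if "c \<in> free_mod" "d \<in> free_mod" for c d
    using that by (rule multilin_ext_Cons_fadd)
  show "multilin_ext \<psi> (amul a c # bs) = a * multilin_ext \<psi> (c # bs)" if "c \<in> free_mod" for a c
    using that by (rule multilin_ext_Cons_amul)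
  have "multilin_ext (\<lambda>vs. \<psi> (x * y # vs)) bs
      = multilin_ext (\<lambda>vs. x * \<psi> (y # vs) + y * \<psi> (x # vs)) bs" for x y
    using multider_mult[OF der, of "_ # _" 0 x y] by (intro multilin_ext_cong) simp
  then show "multilin_ext \<psi> (dgen (x * y) # bs)
      = x * multilin_ext \<psi> (dgen y # bs) + y * multilin_ext \<psi> (dgen x # bs)" for x y
    by (simp only: multilin_ext_dgen_Cons multilin_ext_add_fun multilin_ext_mult_fun)
  have "multilin_ext (\<lambda>vs. \<psi> ((x + y) # vs)) bs
      = multilin_ext (\<lambda>vs. \<psi> (x # vs) + \<psi> (y # vs)) bs" for x y
    using multider_add[OF der, of "_ # _" 0 x y] by (intro multilin_ext_cong) simp
  then show "multilin_ext \<psi> (dgen (x + y) # bs)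
      = multilin_ext \<psi> (dgen x # bs) + multilin_ext \<psi> (dgen y # bs)" for x y
    by (simp only: multilin_ext_dgen_Cons multilin_ext_add_fun)
  have "multilin_ext (\<lambda>vs. \<psi> (scale c 1 # vs)) bs = multilin_ext (\<lambda>vs. 0) bs" for c
    using multider_scalar[OF vs der, of "_ # _" 0] by (intro multilin_ext_cong) simp
  then show "multilin_ext \<psi> (dgen (scale c 1) # bs) = 0" for c
    by (simp only: multilin_ext_dgen_Cons multilin_ext_zero_fun)
qed

lemma multilin_ext_kaehler_cong:
  assumes vs: "vector_space scale"
    and "list_all2 (kaehler_eq scale) bs bs'" "set bs \<subseteq> free_mod" "set bs' \<subseteq> free_mod"
    and "multider scale (length bs) \<psi>"
  shows "multilin_ext \<psi> bs = multilin_ext \<psi> bs'"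
  using assms(2-)
proof (induction bs bs' arbitrary: \<psi> rule: list_all2_induct)
  case (Cons b bs b' bs')
  have rel: "fsub b b' \<in> kaehler_rel scale" using Cons.hyps(1) by (simp add: kaehler_eq_def)
  have "multilin_ext \<psi> (b # bs) = multilin_ext \<psi> (fadd b' (fsub b b') # bs)"
    by (simp only: fadd_fsub_cancel)
  also have "\<dots> = multilin_ext \<psi> (b' # bs) + multilin_ext \<psi> (fsub b b' # bs)"
    using Cons.prems kaehler_rel_in_free_mod[OF rel] by (intro multilin_ext_Cons_fadd) simp_all
  also have "multilin_ext \<psi> (fsub b b' # bs) = 0"
    using Cons.prems(3) by (intro multilin_ext_Cons_kaehler_rel[OF vs _ rel]) simp
  also have "multilin_ext \<psi> (b' # bs) = multilin_ext \<psi> (b' # bs')"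
  proof -
    have "multider scale (length bs) (\<lambda>vs. \<psi> (v # vs))" for v
      using Cons.prems(3) by (simp add: multider_Cons)
    with Cons.prems show ?thesis by (simp add: Cons.IH)
  qed
  finally show ?case by simp
qed simp

lemma sum_sum_antisym_eq_zero:
  assumes "finite T" and antisym: "\<And>v w. c v w + c w v = 0" and diag: "\<And>v. c v v = 0"
  shows "(\<Sum>v\<in>T. \<Sum>w\<in>T. b v * b w * c v w) = (0 :: 'a::comm_ring_1)"
  using \<open>finite T\<close>
proof (induction T rule: finite_induct)
  case empty
  then show ?case by simp
next
  case (insert t T)
  have cross: "(\<Sum>w\<in>T. b t * b w * c t w) + (\<Sum>v\<in>T. b v * b t * c v t) = 0"
    by (simp add: sum.distrib[symmetric] mult.commute[of "b _" "b t"] distrib_left[symmetric] antisym)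
  have "(\<Sum>v\<in>insert t T. \<Sum>w\<in>insert t T. b v * b w * c v w)
      = b t * b t * c t t + ((\<Sum>w\<in>T. b t * b w * c t w) + (\<Sum>v\<in>T. b v * b t * c v t))
        + (\<Sum>v\<in>T. \<Sum>w\<in>T. b v * b w * c v w)"
    using insert.hyps by (simp add: sum.distrib add_ac)
  then show ?case by (simp only: cross insert.IH diag) simp
qed

lemma multilin_ext_alternating:
  fixes \<psi> :: "'a::comm_ring_1 list \<Rightarrow> 'a"
  assumes der: "multider scale (length bs) \<psi>" and "set bs \<subseteq> free_mod"
    and ij: "i < j" "j < length bs" and eq: "bs ! i = bs ! j"
  shows "multilin_ext \<psi> bs = 0"
proof -
  define b where "b = bs ! j"
  define bs0 where "bs0 = bs[i := dgen 0, j := dgen 0]"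
  define c where "c v w = multilin_ext (\<lambda>vs. \<psi> (vs[i := v, j := w])) bs0" for v w
  let ?G = "\<lambda>x y. multilin_ext \<psi> (bs[j := y, i := x])"
  have b: "b \<in> free_mod" using assms by (auto simp: b_def)
  have swap: "xs[i := x, j := y] = xs[j := y, i := x]" for xs :: "('a \<Rightarrow> 'a) list" and x y
    using ij by (simp add: list_update_swap)
  have gen: "?G (dgen v) (dgen w) = c v w" for v w
    unfolding c_def bs0_def using ij by (rule multilin_ext_update2_dgen)
  have "bs[j := b, i := b] = bs" unfolding b_def using eq by (metis list_update_id)
  then have "multilin_ext \<psi> bs = ?G b b" by simp
  also have "\<dots> = (\<Sum>v\<in>fsupp b. \<Sum>w\<in>fsupp b. b v * b w * ?G (dgen v) (dgen w))"
  proof (rule free_mod_bilinear_expand[OF _ _ _ _ b b])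
    show "?G (fadd x y) z = ?G x z + ?G y z"
      if "x \<in> free_mod" "y \<in> free_mod" "z \<in> free_mod" for x y z
      using that ij by (simp add: multilin_ext_fadd)
    show "?G (amul a x) z = a * ?G x z" if "x \<in> free_mod" "z \<in> free_mod" for a x z
      using that ij by (simp add: multilin_ext_amul)
    show "?G z (fadd x y) = ?G z x + ?G z y"
      if "x \<in> free_mod" "y \<in> free_mod" "z \<in> free_mod" for x y z
      using that ij by (simp add: multilin_ext_fadd swap[symmetric])
    show "?G z (amul a x) = a * ?G z x" if "x \<in> free_mod" "z \<in> free_mod" for a x z
      using that ij by (simp add: multilin_ext_amul swap[symmetric])
  qed
  finally have expand: "multilin_ext \<psi> bs = (\<Sum>v\<in>fsupp b. \<Sum>w\<in>fsupp b. b v * b w * c v w)"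
    by (simp only: gen)
  have "c v w + c w v = multilin_ext (\<lambda>vs. 0) bs0" for v w
    unfolding c_def multilin_ext_add_fun[symmetric]
    by (rule multilin_ext_cong) (simp add: bs0_def multider_antisym[OF der _ ij])
  moreover have "c v v = multilin_ext (\<lambda>vs. 0) bs0" for v
    unfolding c_def
    by (rule multilin_ext_cong, rule multider_alternating[OF der _ ij]) (use ij in \<open>simp_all add: bs0_def\<close>)
  ultimately show ?thesis
    using b unfolding expand multilin_ext_zero_fun
    by (intro sum_sum_antisym_eq_zero) (simp_all add: free_mod_iff_finite_fsupp)
qed

section \<open>Quadratic maps on the free module\<close>

lemma strict_linear_orderD:
  assumes "strict_linear_order r"
  shows strict_linear_order_irrefl: "(u, u) \<notin> r"
    and strict_linear_order_total: "u \<noteq> v \<Longrightarrow> (u, v) \<in> r \<or> (v, u) \<in> r"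
    and strict_linear_order_asym: "(u, v) \<in> r \<Longrightarrow> (v, u) \<notin> r"
  using assms unfolding strict_linear_order_on_def irrefl_def total_on_def trans_def by blast+

lemma sum_sum_split_strict_linear_order:
  assumes r: "strict_linear_order r" and "finite T"
  shows "(\<Sum>u\<in>T. \<Sum>v\<in>T. h u v) =
    (\<Sum>u\<in>T. \<Sum>v\<in>T. if (u, v) \<in> r then h u v + h v u else 0) + (\<Sum>u\<in>T. h u u)"
proof -
  have split: "h u v = (if (u, v) \<in> r then h u v else 0) + (if (v, u) \<in> r then h u v else 0)
      + (if u = v then h u v else 0)" for u v
    using strict_linear_order_total[OF r, of u v] strict_linear_order_asym[OF r, of u v]
      strict_linear_order_irrefl[OF r, of u] by auto
  have "(\<Sum>u\<in>T. \<Sum>v\<in>T. h u v) =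
      (\<Sum>u\<in>T. \<Sum>v\<in>T. if (u, v) \<in> r then h u v else 0)
      + (\<Sum>u\<in>T. \<Sum>v\<in>T. if (v, u) \<in> r then h u v else 0)
      + (\<Sum>u\<in>T. \<Sum>v\<in>T. if u = v then h u v else 0)"
    by (subst split) (simp only: sum.distrib)
  also have "(\<Sum>u\<in>T. \<Sum>v\<in>T. if (v, u) \<in> r then h u v else 0)
      = (\<Sum>v\<in>T. \<Sum>u\<in>T. if (v, u) \<in> r then h u v else 0)"
    by (rule sum.swap)
  also have "(\<Sum>u\<in>T. \<Sum>v\<in>T. if u = v then h u v else 0) = (\<Sum>u\<in>T. h u u)"
    using \<open>finite T\<close> by simp
  also have "(\<Sum>u\<in>T. \<Sum>v\<in>T. if (u, v) \<in> r then h u v else 0)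
      + (\<Sum>v\<in>T. \<Sum>u\<in>T. if (v, u) \<in> r then h u v else 0)
      = (\<Sum>u\<in>T. \<Sum>v\<in>T. if (u, v) \<in> r then h u v + h v u else 0)"
    by (simp only: sum.distrib[symmetric]) (intro sum.cong refl, simp)
  finally show ?thesis .
qed

text \<open>The strict linear order \<open>r\<close> only serves to pick one of the two cross terms
  \<open>a\<^sub>u a\<^sub>v B u v\<close> and \<open>a\<^sub>v a\<^sub>u B v u\<close> of each pair \<open>{u, v}\<close>.\<close>

definition quad_ext :: "'a rel \<Rightarrow> ('a \<Rightarrow> 'a) \<Rightarrow> ('a \<Rightarrow> 'a \<Rightarrow> 'a) \<Rightarrow> ('a \<Rightarrow> 'a::comm_ring_1) \<Rightarrow> 'a" where
  "quad_ext r q B \<alpha> = (\<Sum>u\<in>fsupp \<alpha>. \<alpha> u ^ 2 * q u) +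
     (\<Sum>u\<in>fsupp \<alpha>. \<Sum>v\<in>fsupp \<alpha>. if (u, v) \<in> r then \<alpha> u * \<alpha> v * B u v else 0)"

lemma quad_ext_superset:
  assumes "finite T" "fsupp \<alpha> \<subseteq> T"
  shows "quad_ext r q B \<alpha> = (\<Sum>u\<in>T. \<alpha> u ^ 2 * q u) +
     (\<Sum>u\<in>T. \<Sum>v\<in>T. if (u, v) \<in> r then \<alpha> u * \<alpha> v * B u v else 0)"
proof -
  have zero: "\<alpha> u = 0" if "u \<in> T - fsupp \<alpha>" for u
    using that by (simp add: fsupp_def)
  have "(\<Sum>u\<in>fsupp \<alpha>. \<Sum>v\<in>fsupp \<alpha>. if (u, v) \<in> r then \<alpha> u * \<alpha> v * B u v else 0)
      = (\<Sum>u\<in>T. \<Sum>v\<in>T. if (u, v) \<in> r then \<alpha> u * \<alpha> v * B u v else 0)"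
    by (intro sum.mono_neutral_cong_left assms sum.neutral ballI) (simp_all add: zero)
  moreover have "(\<Sum>u\<in>fsupp \<alpha>. \<alpha> u ^ 2 * q u) = (\<Sum>u\<in>T. \<alpha> u ^ 2 * q u)"
    by (intro sum.mono_neutral_left assms) (simp add: zero)
  ultimately show ?thesis unfolding quad_ext_def by simp
qed

lemma quad_ext_dgen: "strict_linear_order r \<Longrightarrow> quad_ext r q B (dgen u) = q u"
  using quad_ext_superset[of "{u}" "dgen u" r q B] fsupp_dgen_subset[of u]
  by (simp add: dgen_def strict_linear_order_irrefl)

lemma quad_ext_zero_fun: "quad_ext r (\<lambda>_. 0) (\<lambda>_ _. 0) \<alpha> = 0"
  by (simp add: quad_ext_def cong: if_cong)

lemma quad_ext_add_fun:
  "quad_ext r (\<lambda>u. q u + q' u) (\<lambda>u v. B u v + B' u v) \<alpha> = quad_ext r q B \<alpha> + quad_ext r q' B' \<alpha>"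
proof -
  have if_add: "(if c then x * (y + z) else 0) = (if c then x * y else 0) + (if c then x * z else (0 :: 'a))"
    for c x y z by (simp add: distrib_left)
  show ?thesis by (simp add: quad_ext_def distrib_left sum.distrib if_add)
qed

lemma quad_ext_mult_fun:
  "quad_ext r (\<lambda>u. a * q u) (\<lambda>u v. a * B u v) \<alpha> = a * quad_ext r q B \<alpha>"
proof -
  have if_mult: "(if c then x * (a * y) else 0) = a * (if c then x * y else (0 :: 'a))" for c x y
    by (simp add: mult.left_commute)
  show ?thesis by (simp add: quad_ext_def distrib_left sum_distrib_left mult.left_commute if_mult)
qed

lemma quad_ext_amul:
  assumes "\<alpha> \<in> free_mod"
  shows "quad_ext r q B (amul a \<alpha>) = a ^ 2 * quad_ext r q B \<alpha>"
proof -
  have "finite (fsupp \<alpha>)" using assms by (simp add: free_mod_iff_finite_fsupp)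
  then have "quad_ext r q B (amul a \<alpha>) = quad_ext r (\<lambda>u. a ^ 2 * q u) (\<lambda>u v. a ^ 2 * B u v) \<alpha>"
    using fsupp_amul_subset[of a \<alpha>]
    by (simp add: quad_ext_superset[of "fsupp \<alpha>"] amul_def power2_eq_square mult_ac cong: if_cong)
  then show ?thesis by (simp only: quad_ext_mult_fun)
qed

text \<open>The hypothesis \<open>B u u = 2 * q u\<close> accounts for the cross term of \<open>(a + b)\<^sup>2 * q u\<close>.\<close>

lemma quad_ext_fadd:
  assumes r: "strict_linear_order r"
    and sym: "\<And>u v. B v u = B u v" and diag: "\<And>u. B u u = 2 * q u"
    and \<alpha>: "\<alpha> \<in> free_mod" and \<alpha>': "\<alpha>' \<in> free_mod"
  shows "quad_ext r q B (fadd \<alpha> \<alpha>') = quad_ext r q B \<alpha> + quad_ext r q B \<alpha>'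
    + (\<Sum>u\<in>fsupp \<alpha>. \<Sum>v\<in>fsupp \<alpha>'. \<alpha> u * \<alpha>' v * B u v)"
proof -
  define T where "T = fsupp \<alpha> \<union> fsupp \<alpha>'"
  have T: "finite T" using \<alpha> \<alpha>' by (simp add: T_def free_mod_iff_finite_fsupp)
  have sub: "fsupp \<alpha> \<subseteq> T" "fsupp \<alpha>' \<subseteq> T" "fsupp (fadd \<alpha> \<alpha>') \<subseteq> T"
    using fsupp_fadd_subset[of \<alpha> \<alpha>'] by (auto simp: T_def)
  define h where "h u v = \<alpha> u * \<alpha>' v * B u v" for u v
  define Q where "Q f = (\<Sum>u\<in>T. f u ^ 2 * q u)" for f :: "'a \<Rightarrow> 'a"
  define P where "P f = (\<Sum>u\<in>T. \<Sum>v\<in>T. if (u, v) \<in> r then f u * f v * B u v else 0)"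
    for f :: "'a \<Rightarrow> 'a"
  have quad: "quad_ext r q B f = Q f + P f" if "fsupp f \<subseteq> T" for f
    unfolding Q_def P_def using T that by (rule quad_ext_superset)
  have "(\<Sum>u\<in>fsupp \<alpha>. \<Sum>v\<in>fsupp \<alpha>'. h u v) = (\<Sum>u\<in>T. \<Sum>v\<in>T. h u v)"
    unfolding h_def
    by (simp only: mult.assoc sum_distrib_left[symmetric] sum_fsupp_superset[OF T sub(1)]
        sum_fsupp_superset[OF T sub(2)])
  also have "\<dots> = (\<Sum>u\<in>T. \<Sum>v\<in>T. if (u, v) \<in> r then h u v + h v u else 0) + (\<Sum>u\<in>T. h u u)"
    by (rule sum_sum_split_strict_linear_order[OF r T])
  finally have cross: "(\<Sum>u\<in>fsupp \<alpha>. \<Sum>v\<in>fsupp \<alpha>'. h u v)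
      = (\<Sum>u\<in>T. \<Sum>v\<in>T. if (u, v) \<in> r then h u v + h v u else 0) + (\<Sum>u\<in>T. h u u)" .
  have "fadd \<alpha> \<alpha>' u ^ 2 * q u = \<alpha> u ^ 2 * q u + \<alpha>' u ^ 2 * q u + h u u" for u
    unfolding h_def fadd_def diag by (simp add: power2_sum algebra_simps)
  then have Q: "Q (fadd \<alpha> \<alpha>') = Q \<alpha> + Q \<alpha>' + (\<Sum>u\<in>T. h u u)"
    unfolding Q_def by (simp add: sum.distrib)
  have "(if c then fadd \<alpha> \<alpha>' u * fadd \<alpha> \<alpha>' v * B u v else 0)
      = (if c then \<alpha> u * \<alpha> v * B u v else 0) + (if c then \<alpha>' u * \<alpha>' v * B u v else 0)
        + (if c then h u v + h v u else 0)" for c u v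
    unfolding h_def fadd_def sym[of u v] by (simp add: algebra_simps)
  then have P: "P (fadd \<alpha> \<alpha>') = P \<alpha> + P \<alpha>' + (\<Sum>u\<in>T. \<Sum>v\<in>T. if (u, v) \<in> r then h u v + h v u else 0)"
    unfolding P_def by (simp only: sum.distrib)
  show ?thesis
    unfolding quad[OF sub(1)] quad[OF sub(2)] quad[OF sub(3)] Q P h_def[symmetric] cross
    by (simp add: ac_simps)
qed

section \<open>Cochains\<close>

lemma C_PA_D:
  assumes "C_PA scale k \<phi> \<omega>"
  shows C_PA_multider_phi: "multider scale k \<phi>"
    and C_PA_omega_scale: "length zs = k - 2 \<Longrightarrow> \<omega> (scale c x) zs = scale (c ^ 2) (\<omega> x zs)"
    and C_PA_omega_add:
      "length zs = k - 2 \<Longrightarrow> \<omega> (x + y) zs = \<omega> x zs + \<omega> y zs + \<phi> (x # y # zs)"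
    and C_PA_omega_mult: "length zs = k - 2 \<Longrightarrow>
      \<omega> (x * y) zs = x ^ 2 * \<omega> y zs + y ^ 2 * \<omega> x zs + x * y * \<phi> (x # y # zs)"
    and C_PA_omega_slot_add: "length zs = k - 2 \<Longrightarrow> i < k - 2 \<Longrightarrow>
      \<omega> x (zs[i := u + v]) = \<omega> x (zs[i := u]) + \<omega> x (zs[i := v])"
    and C_PA_omega_slot_scale: "length zs = k - 2 \<Longrightarrow> i < k - 2 \<Longrightarrow>
      \<omega> x (zs[i := scale c u]) = scale c (\<omega> x (zs[i := u]))"
    and C_PA_omega_slot_mult: "length zs = k - 2 \<Longrightarrow> i < k - 2 \<Longrightarrow>
      \<omega> x (zs[i := u * v]) = u * \<omega> x (zs[i := v]) + v * \<omega> x (zs[i := u])"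
    and C_PA_omega_alternating: "length zs = k - 2 \<Longrightarrow> i < j \<Longrightarrow> j < k - 2 \<Longrightarrow>
      zs ! i = zs ! j \<Longrightarrow> \<omega> x zs = 0"
  using assms unfolding C_PA_def by (simp_all only:)

lemma C_PA_multider_omega: "C_PA scale k \<phi> \<omega> \<Longrightarrow> multider scale (k - 2) (\<omega> x)"
  unfolding multider_def
  by (simp add: C_PA_omega_slot_add C_PA_omega_slot_scale C_PA_omega_slot_mult C_PA_omega_alternating)

lemma lr_phiD:
  assumes "lr_phi scale k \<Phi>"
  shows lr_phi_kaehler_cong: "length as = k \<Longrightarrow> set as \<subseteq> free_mod \<Longrightarrow> set bs \<subseteq> free_mod \<Longrightarrow>
      list_all2 (kaehler_eq scale) as bs \<Longrightarrow> \<Phi> as = \<Phi> bs"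
    and lr_phi_fadd: "length as = k \<Longrightarrow> set as \<subseteq> free_mod \<Longrightarrow> i < k \<Longrightarrow> \<alpha> \<in> free_mod \<Longrightarrow>
      \<beta> \<in> free_mod \<Longrightarrow> \<Phi> (as[i := fadd \<alpha> \<beta>]) = \<Phi> (as[i := \<alpha>]) + \<Phi> (as[i := \<beta>])"
    and lr_phi_amul: "length as = k \<Longrightarrow> set as \<subseteq> free_mod \<Longrightarrow> i < k \<Longrightarrow> \<alpha> \<in> free_mod \<Longrightarrow>
      \<Phi> (as[i := amul a \<alpha>]) = a * \<Phi> (as[i := \<alpha>])"
    and lr_phi_alternating: "length as = k \<Longrightarrow> set as \<subseteq> free_mod \<Longrightarrow> i < j \<Longrightarrow> j < k \<Longrightarrow>
      as ! i = as ! j \<Longrightarrow> \<Phi> as = 0"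
  using assms unfolding lr_phi_def by (simp_all only:)

lemma lr_phi_kaehler_rel:
  assumes "lr_phi scale k \<Phi>" "length as = k" "set as \<subseteq> free_mod" "i < k"
    and "\<rho> \<in> kaehler_rel scale"
  shows "\<Phi> (as[i := \<rho>]) = 0"
proof -
  have "kaehler_eq scale \<rho> (\<lambda>_. 0)"
    using assms(5) by (simp add: kaehler_eq_def fsub_def)
  then have "list_all2 (kaehler_eq scale) (as[i := \<rho>]) (as[i := amul 0 (\<lambda>_. 0)])"
    by (simp add: amul_zero list_all2_update_cong list_all2_refl kaehler_eq_refl)
  then have "\<Phi> (as[i := \<rho>]) = \<Phi> (as[i := amul 0 (\<lambda>_. 0)])"
    using assms by (intro lr_phi_kaehler_cong[OF assms(1)])
      (auto simp: kaehler_rel_in_free_mod zero_in_free_mod amul_zero dest: subsetD[OF set_update_subset_insert])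
  also have "\<dots> = 0"
    using assms by (simp add: lr_phi_amul zero_in_free_mod)
  finally show ?thesis .
qed

lemma C_LR_D:
  assumes "C_LR scale k \<Phi> W"
  shows C_LR_slot_fadd: "\<alpha> \<in> free_mod \<Longrightarrow> length bs = k - 2 \<Longrightarrow> set bs \<subseteq> free_mod \<Longrightarrow>
      i < k - 2 \<Longrightarrow> \<beta> \<in> free_mod \<Longrightarrow> \<gamma> \<in> free_mod \<Longrightarrow>
      W \<alpha> (bs[i := fadd \<beta> \<gamma>]) = W \<alpha> (bs[i := \<beta>]) + W \<alpha> (bs[i := \<gamma>])"
    and C_LR_slot_amul: "\<alpha> \<in> free_mod \<Longrightarrow> length bs = k - 2 \<Longrightarrow> set bs \<subseteq> free_mod \<Longrightarrow>
      i < k - 2 \<Longrightarrow> \<beta> \<in> free_mod \<Longrightarrow> W \<alpha> (bs[i := amul a \<beta>]) = a * W \<alpha> (bs[i := \<beta>])"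
    and C_LR_amul: "\<alpha> \<in> free_mod \<Longrightarrow> length bs = k - 2 \<Longrightarrow> set bs \<subseteq> free_mod \<Longrightarrow>
      W (amul a \<alpha>) bs = a ^ 2 * W \<alpha> bs"
    and C_LR_fadd: "\<alpha> \<in> free_mod \<Longrightarrow> \<alpha>' \<in> free_mod \<Longrightarrow> length bs = k - 2 \<Longrightarrow>
      set bs \<subseteq> free_mod \<Longrightarrow> W (fadd \<alpha> \<alpha>') bs = W \<alpha> bs + W \<alpha>' bs + \<Phi> (\<alpha> # \<alpha>' # bs)"
  using assms unfolding C_LR_def by (simp_all only:)

lemma C_LR_free_multilinear:
  assumes "C_LR scale k \<Phi> W" "\<alpha> \<in> free_mod"
  shows "free_multilinear (k - 2) (W \<alpha>)"
  unfolding free_multilinear_def using assms by (simp add: C_LR_slot_fadd C_LR_slot_amul)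

lemma C_LR_eqI:
  assumes W1: "C_LR scale k \<Phi> W1" and W2: "C_LR scale k \<Phi> W2"
    and gen: "\<And>u vs. length vs = k - 2 \<Longrightarrow> W1 (dgen u) (map dgen vs) = W2 (dgen u) (map dgen vs)"
    and "\<alpha> \<in> free_mod" and bs: "length bs = k - 2" "set bs \<subseteq> free_mod"
  shows "W1 \<alpha> bs = W2 \<alpha> bs"
  using \<open>\<alpha> \<in> free_mod\<close>
proof (induction rule: free_mod_induct)
  case zero
  have zero: "W (\<lambda>_. 0) bs = 0" if "C_LR scale k \<Phi> W" for W
    using C_LR_amul[OF that zero_in_free_mod bs, of 0] by (simp add: amul_zero)
  show ?case by (simp only: zero[OF W1] zero[OF W2])
next
  case (insert \<alpha> t)
  have expand: "W (dgen t) bs = multilin_ext (\<lambda>vs. W (dgen t) (map dgen vs)) bs"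
    if "C_LR scale k \<Phi> W" for W
    using C_LR_free_multilinear[OF that dgen_in_free_mod] bs
    by (intro free_multilinear_eq_multilin_ext) simp_all
  have "W1 (dgen t) bs = multilin_ext (\<lambda>vs. W1 (dgen t) (map dgen vs)) bs" by (rule expand[OF W1])
  also have "\<dots> = multilin_ext (\<lambda>vs. W2 (dgen t) (map dgen vs)) bs"
    using bs by (intro multilin_ext_cong gen) simp
  also have "\<dots> = W2 (dgen t) bs" by (rule expand[OF W2, symmetric])
  finally have dgen: "W1 (dgen t) bs = W2 (dgen t) bs" .
  let ?\<alpha>' = "\<alpha>(t := 0)"
  have step: "W (fadd (amul (\<alpha> t) (dgen t)) ?\<alpha>') bs
      = \<alpha> t ^ 2 * W (dgen t) bs + W ?\<alpha>' bs + \<Phi> (amul (\<alpha> t) (dgen t) # ?\<alpha>' # bs)"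
    if "C_LR scale k \<Phi> W" for W
    using bs fun_upd_zero_in_free_mod[OF insert.hyps]
    by (simp add: C_LR_fadd[OF that] C_LR_amul[OF that] amul_in_free_mod dgen_in_free_mod)
  show ?case using insert.IH dgen by (simp only: step[OF W1] step[OF W2])
qed

section \<open>Lifting a cochain in \<open>C\<^sub>P\<^sub>A\<close> to \<open>C\<^sub>L\<^sub>R\<close>\<close>

locale C_PA_lift =
  fixes scale :: "'k::field \<Rightarrow> 'a::comm_ring_1 \<Rightarrow> 'a"
    and k :: nat
    and \<phi> :: "'a list \<Rightarrow> 'a" and \<omega> :: "'a \<Rightarrow> 'a list \<Rightarrow> 'a"
    and \<Phi> :: "('a \<Rightarrow> 'a) list \<Rightarrow> 'a"
    and r :: "'a rel"
  assumes algebra: "unital_K_algebra scale"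
    and two_eq_zero: "(2 :: 'a) = 0"
    and two_le_k: "2 \<le> k"
    and cochain: "C_PA scale k \<phi> \<omega>"
    and Phi: "lr_phi scale k \<Phi>"
    and Phi_map_dgen: "\<And>us. length us = k \<Longrightarrow> \<Phi> (map dgen us) = \<phi> us"
    and order: "strict_linear_order r"
begin

definition omega_hat :: "('a \<Rightarrow> 'a) \<Rightarrow> ('a \<Rightarrow> 'a) list \<Rightarrow> 'a" where
  "omega_hat \<alpha> bs = quad_ext r (\<lambda>u. multilin_ext (\<omega> u) bs) (\<lambda>u v. \<Phi> (dgen u # dgen v # bs)) \<alpha>"

lemma vector_space: "vector_space scale"
  using algebra by (simp add: unital_K_algebra_def)

lemma scale_one_mult: "scale c 1 * x = scale c x"
  using algebra unfolding unital_K_algebra_def by (metis mult_1)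

lemma kmul_eq_amul: "kmul scale c f = amul (scale c 1) f"
  by (simp add: kmul_def amul_def scale_one_mult)

lemma scale_one_square_mult: "scale c 1 ^ 2 * x = scale (c ^ 2) x"
  using vector_space.vector_space_assms(3)[OF vector_space]
  by (simp add: power2_eq_square mult.assoc scale_one_mult)

lemma add_self: "x + x = (0 :: 'a)"
  using two_eq_zero by (metis mult_2 mult_zero_left)

lemma add_eq_zero_imp_eq: "x + y = 0 \<Longrightarrow> x = (y :: 'a)"
  by (metis add_self add.assoc add_0_right)

lemma fsub_eq_fadd: "fsub f g = fadd f (g :: 'a \<Rightarrow> 'a)"
  using add_self by (auto simp: fsub_def fadd_def add_eq_0_iff2 eq_neg_iff_add_eq_0)

lemma omega_one: "length zs = k - 2 \<Longrightarrow> \<omega> 1 zs = 0"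
  using C_PA_omega_mult[OF cochain, of zs 1 1]
    multider_alternating[OF C_PA_multider_phi[OF cochain], of "1 # 1 # zs" 0 1] two_le_k
  by simp

lemma omega_scalar: "length zs = k - 2 \<Longrightarrow> \<omega> (scale c 1) zs = 0"
  using vector_space.vector_space_assms(1)[OF vector_space, of "c ^ 2" 0 0]
  by (simp add: C_PA_omega_scale[OF cochain] omega_one)

lemma omega_hat_dgen: "omega_hat (dgen u) bs = multilin_ext (\<omega> u) bs"
  by (simp add: omega_hat_def quad_ext_dgen order)

lemma omega_hat_amul: "\<alpha> \<in> free_mod \<Longrightarrow> omega_hat (amul a \<alpha>) bs = a ^ 2 * omega_hat \<alpha> bs"
  by (simp add: omega_hat_def quad_ext_amul)

lemma omega_hat_zero: "omega_hat (\<lambda>_. 0) bs = 0"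
  by (simp add: omega_hat_def quad_ext_def fsupp_def)

context
  fixes bs :: "('a \<Rightarrow> 'a) list"
  assumes bs: "length bs = k - 2" "set bs \<subseteq> free_mod"
begin

lemma length_Phi_args: "length (a # b # bs) = k"
  using bs two_le_k by simp

lemma Phi_fadd_left:
  "a \<in> free_mod \<Longrightarrow> b \<in> free_mod \<Longrightarrow> c \<in> free_mod \<Longrightarrow>
   \<Phi> (fadd a b # c # bs) = \<Phi> (a # c # bs) + \<Phi> (b # c # bs)"
  using lr_phi_fadd[OF Phi length_Phi_args, of a c 0] bs two_le_k by simp

lemma Phi_fadd_right:
  "a \<in> free_mod \<Longrightarrow> b \<in> free_mod \<Longrightarrow> c \<in> free_mod \<Longrightarrow>
   \<Phi> (c # fadd a b # bs) = \<Phi> (c # a # bs) + \<Phi> (c # b # bs)"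
  using lr_phi_fadd[OF Phi length_Phi_args, of c a 1] bs two_le_k by simp

lemma Phi_amul_left:
  "a \<in> free_mod \<Longrightarrow> c \<in> free_mod \<Longrightarrow> \<Phi> (amul x a # c # bs) = x * \<Phi> (a # c # bs)"
  using lr_phi_amul[OF Phi length_Phi_args, of a c 0] bs two_le_k by simp

lemma Phi_amul_right:
  "a \<in> free_mod \<Longrightarrow> c \<in> free_mod \<Longrightarrow> \<Phi> (c # amul x a # bs) = x * \<Phi> (c # a # bs)"
  using lr_phi_amul[OF Phi length_Phi_args, of c a 1] bs two_le_k by simp

lemma Phi_diag: "a \<in> free_mod \<Longrightarrow> \<Phi> (a # a # bs) = 0"
  using lr_phi_alternating[OF Phi length_Phi_args, of a a 0 1] bs two_le_k by simp

lemma Phi_swap: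
  assumes "a \<in> free_mod" "b \<in> free_mod"
  shows "\<Phi> (a # b # bs) = \<Phi> (b # a # bs)"
proof (rule add_eq_zero_imp_eq)
  have "0 = \<Phi> (fadd a b # fadd a b # bs)" using assms by (simp add: Phi_diag fadd_in_free_mod)
  also have "\<dots> = \<Phi> (a # b # bs) + \<Phi> (b # a # bs)"
    using assms
    by (simp add: Phi_fadd_left Phi_fadd_right fadd_in_free_mod) (simp add: Phi_diag)
  finally show "\<Phi> (a # b # bs) + \<Phi> (b # a # bs) = 0" by (rule sym)
qed

lemma Phi_kaehler_cong_left:
  assumes "a \<in> free_mod" "a' \<in> free_mod" "c \<in> free_mod" "kaehler_eq scale a a'"
  shows "\<Phi> (a # c # bs) = \<Phi> (a' # c # bs)"
  using assms bs length_Phi_args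
  by (intro lr_phi_kaehler_cong[OF Phi]) (simp_all add: list_all2_refl kaehler_eq_refl)

lemma Phi_kaehler_rel_right:
  assumes "c \<in> free_mod" "\<rho> \<in> kaehler_rel scale"
  shows "\<Phi> (c # \<rho> # bs) = 0"
  using lr_phi_kaehler_rel[OF Phi length_Phi_args, of c "\<lambda>_. 0" 1 \<rho>] assms bs two_le_k
  by (simp add: zero_in_free_mod)

lemma Phi_dgen: "\<Phi> (dgen x # dgen y # bs) = multilin_ext (\<lambda>vs. \<phi> (x # y # vs)) bs"
proof -
  have "free_multilinear (length bs) (\<lambda>cs. \<Phi> (dgen x # dgen y # cs))"
    unfolding free_multilinear_def
    using lr_phi_fadd[OF Phi, of "dgen x # dgen y # _" "Suc (Suc _)"]
      lr_phi_amul[OF Phi, of "dgen x # dgen y # _" "Suc (Suc _)"] bs two_le_k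
    by (simp add: dgen_in_free_mod)
  then have "\<Phi> (dgen x # dgen y # bs) = multilin_ext (\<lambda>vs. \<Phi> (dgen x # dgen y # map dgen vs)) bs"
    using bs free_multilinear_eq_multilin_ext by fastforce
  also have "\<dots> = multilin_ext (\<lambda>vs. \<phi> (x # y # vs)) bs"
    using bs two_le_k by (intro multilin_ext_cong) (simp add: Phi_map_dgen[of "x # y # _", simplified])
  finally show ?thesis .
qed

lemma Phi_expand:
  assumes "\<alpha> \<in> free_mod" "\<alpha>' \<in> free_mod"
  shows "\<Phi> (\<alpha> # \<alpha>' # bs) = (\<Sum>u\<in>fsupp \<alpha>. \<Sum>v\<in>fsupp \<alpha>'. \<alpha> u * \<alpha>' v * \<Phi> (dgen u # dgen v # bs))"
  using assms
  by (intro free_mod_bilinear_expand[where G = "\<lambda>a b. \<Phi> (a # b # bs)"])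
     (simp_all add: Phi_fadd_left Phi_fadd_right Phi_amul_left Phi_amul_right)

lemma omega_hat_fadd:
  assumes "\<alpha> \<in> free_mod" "\<alpha>' \<in> free_mod"
  shows "omega_hat (fadd \<alpha> \<alpha>') bs = omega_hat \<alpha> bs + omega_hat \<alpha>' bs + \<Phi> (\<alpha> # \<alpha>' # bs)"
  unfolding omega_hat_def Phi_expand[OF assms]
  using assms two_eq_zero
  by (intro quad_ext_fadd order) (simp_all add: Phi_swap Phi_diag dgen_in_free_mod)

lemma multilin_ext_omega_add:
  "multilin_ext (\<omega> (x + y)) bs
   = multilin_ext (\<omega> x) bs + multilin_ext (\<omega> y) bs + \<Phi> (dgen x # dgen y # bs)"
proof -
  have "multilin_ext (\<omega> (x + y)) bs = multilin_ext (\<lambda>vs. \<omega> x vs + \<omega> y vs + \<phi> (x # y # vs)) bs"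
    using bs by (intro multilin_ext_cong) (simp add: C_PA_omega_add[OF cochain])
  then show ?thesis by (simp only: multilin_ext_add_fun Phi_dgen)
qed

lemma multilin_ext_omega_mult:
  "multilin_ext (\<omega> (x * y)) bs = x ^ 2 * multilin_ext (\<omega> y) bs + y ^ 2 * multilin_ext (\<omega> x) bs
     + x * y * \<Phi> (dgen x # dgen y # bs)"
proof -
  have "multilin_ext (\<omega> (x * y)) bs
      = multilin_ext (\<lambda>vs. x ^ 2 * \<omega> y vs + y ^ 2 * \<omega> x vs + x * y * \<phi> (x # y # vs)) bs"
    using bs by (intro multilin_ext_cong) (simp add: C_PA_omega_mult[OF cochain])
  then show ?thesis by (simp only: multilin_ext_add_fun multilin_ext_mult_fun Phi_dgen)
qed

lemma multilin_ext_omega_scalar: "multilin_ext (\<omega> (scale c 1)) bs = 0"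
proof -
  have "multilin_ext (\<omega> (scale c 1)) bs = multilin_ext (\<lambda>vs. 0) bs"
    using bs by (intro multilin_ext_cong) (simp add: omega_scalar)
  then show ?thesis by (simp only: multilin_ext_zero_fun)
qed

lemma omega_hat_dgen_add:
  "omega_hat (dgen (x + y)) bs = omega_hat (fadd (dgen x) (dgen y)) bs"
  by (simp add: omega_hat_fadd omega_hat_dgen multilin_ext_omega_add dgen_in_free_mod)

lemma omega_hat_dgen_mult:
  "omega_hat (dgen (x * y)) bs = omega_hat (fadd (amul x (dgen y)) (amul y (dgen x))) bs"
  by (simp add: omega_hat_fadd omega_hat_amul omega_hat_dgen multilin_ext_omega_mult
      Phi_amul_left Phi_amul_right Phi_swap[of "dgen x"] amul_in_free_mod dgen_in_free_mod)

text \<open>In characteristic 2 a relation \<open>\<rho> - \<sigma>\<close> equals \<open>\<rho> + \<sigma>\<close>, so by polarization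
  \<open>omega_hat\<close> kills it as soon as \<open>\<rho>\<close> and \<open>\<sigma>\<close> have the same value.\<close>

lemma omega_hat_fsub_eq_zero:
  assumes "\<rho> \<in> free_mod" "\<sigma> \<in> free_mod" "fsub \<rho> \<sigma> \<in> kaehler_rel scale"
    and "omega_hat \<rho> bs = omega_hat \<sigma> bs"
  shows "omega_hat (fsub \<rho> \<sigma>) bs = 0"
proof -
  have "\<Phi> (\<rho> # \<sigma> # bs) = \<Phi> (\<sigma> # \<sigma> # bs)"
    using assms by (intro Phi_kaehler_cong_left) (simp_all add: kaehler_eq_def)
  then show ?thesis
    using assms by (simp add: fsub_eq_fadd omega_hat_fadd Phi_diag add_self)
qed

lemma omega_hat_kaehler_rel: "\<rho> \<in> kaehler_rel scale \<Longrightarrow> omega_hat \<rho> bs = 0"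
proof (induction rule: kaehler_rel.induct)
  case zero
  show ?case by (rule omega_hat_zero)
next
  case (mult x y)
  have eq: "fsub (fsub (dgen (x * y)) (amul x (dgen y))) (amul y (dgen x))
      = fsub (dgen (x * y)) (fadd (amul x (dgen y)) (amul y (dgen x)))"
    by (auto simp: fsub_def fadd_def)
  show ?case
    using kaehler_rel.mult[of x y scale] unfolding eq
    by (intro omega_hat_fsub_eq_zero omega_hat_dgen_mult)
       (simp_all add: fadd_in_free_mod amul_in_free_mod dgen_in_free_mod)
next
  case (add x y)
  have eq: "fsub (fsub (dgen (x + y)) (dgen x)) (dgen y) = fsub (dgen (x + y)) (fadd (dgen x) (dgen y))"
    by (auto simp: fsub_def fadd_def)
  show ?case
    using kaehler_rel.add[of x y scale] unfolding eq
    by (intro omega_hat_fsub_eq_zero omega_hat_dgen_add) (simp_all add: fadd_in_free_mod dgen_in_free_mod)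
next
  case (const c)
  show ?case by (simp add: omega_hat_dgen multilin_ext_omega_scalar)
next
  case (sum f g)
  then show ?case
    using Phi_kaehler_rel_right[of f g]
    by (simp add: omega_hat_fadd kaehler_rel_in_free_mod)
next
  case (smul f a)
  then show ?case by (simp add: omega_hat_amul kaehler_rel_in_free_mod)
qed

lemma omega_hat_kaehler_cong:
  assumes "\<alpha> \<in> free_mod" "\<alpha>' \<in> free_mod" "kaehler_eq scale \<alpha> \<alpha>'"
  shows "omega_hat \<alpha> bs = omega_hat \<alpha>' bs"
proof -
  have rel: "fsub \<alpha> \<alpha>' \<in> kaehler_rel scale" using assms(3) by (simp add: kaehler_eq_def)
  have "omega_hat \<alpha> bs = omega_hat (fadd \<alpha>' (fsub \<alpha> \<alpha>')) bs" by (simp only: fadd_fsub_cancel)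
  also have "\<dots> = omega_hat \<alpha>' bs"
    using assms(2) rel
    by (simp add: omega_hat_fadd omega_hat_kaehler_rel Phi_kaehler_rel_right kaehler_rel_in_free_mod)
  finally show ?thesis .
qed

end

lemma omega_hat_kaehler_cong_list:
  assumes "length bs = k - 2" "set bs \<subseteq> free_mod" "set bs' \<subseteq> free_mod"
    and "list_all2 (kaehler_eq scale) bs bs'"
  shows "omega_hat \<alpha> bs = omega_hat \<alpha> bs'"
proof -
  have "multilin_ext (\<omega> u) bs = multilin_ext (\<omega> u) bs'" for u
    using assms
    by (intro multilin_ext_kaehler_cong[OF vector_space]) (simp_all add: C_PA_multider_omega[OF cochain])
  moreover have "\<Phi> (dgen u # dgen v # bs) = \<Phi> (dgen u # dgen v # bs')" for u v
    using assms two_le_k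
    by (intro lr_phi_kaehler_cong[OF Phi]) (simp_all add: dgen_in_free_mod kaehler_eq_refl)
  ultimately show ?thesis by (simp add: omega_hat_def)
qed

lemma omega_hat_slot_fadd:
  assumes "length bs = k - 2" "set bs \<subseteq> free_mod" "i < k - 2" "\<beta> \<in> free_mod" "\<gamma> \<in> free_mod"
  shows "omega_hat \<alpha> (bs[i := fadd \<beta> \<gamma>]) = omega_hat \<alpha> (bs[i := \<beta>]) + omega_hat \<alpha> (bs[i := \<gamma>])"
proof -
  have "multilin_ext (\<omega> u) (bs[i := fadd \<beta> \<gamma>])
      = multilin_ext (\<omega> u) (bs[i := \<beta>]) + multilin_ext (\<omega> u) (bs[i := \<gamma>])" for u
    using assms by (simp add: multilin_ext_fadd)
  moreover have "\<Phi> (dgen u # dgen v # bs[i := fadd \<beta> \<gamma>])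
      = \<Phi> (dgen u # dgen v # bs[i := \<beta>]) + \<Phi> (dgen u # dgen v # bs[i := \<gamma>])" for u v
    using lr_phi_fadd[OF Phi, of "dgen u # dgen v # bs" "Suc (Suc i)" \<beta> \<gamma>] assms two_le_k
    by (simp add: dgen_in_free_mod)
  ultimately show ?thesis by (simp add: omega_hat_def quad_ext_add_fun)
qed

lemma omega_hat_slot_amul:
  assumes "length bs = k - 2" "set bs \<subseteq> free_mod" "i < k - 2" "\<beta> \<in> free_mod"
  shows "omega_hat \<alpha> (bs[i := amul a \<beta>]) = a * omega_hat \<alpha> (bs[i := \<beta>])"
proof -
  have "multilin_ext (\<omega> u) (bs[i := amul a \<beta>]) = a * multilin_ext (\<omega> u) (bs[i := \<beta>])" for u
    using assms by (simp add: multilin_ext_amul)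
  moreover have "\<Phi> (dgen u # dgen v # bs[i := amul a \<beta>]) = a * \<Phi> (dgen u # dgen v # bs[i := \<beta>])"
    for u v
    using lr_phi_amul[OF Phi, of "dgen u # dgen v # bs" "Suc (Suc i)" \<beta> a] assms two_le_k
    by (simp add: dgen_in_free_mod)
  ultimately show ?thesis by (simp add: omega_hat_def quad_ext_mult_fun)
qed

lemma omega_hat_alternating:
  assumes "length bs = k - 2" "set bs \<subseteq> free_mod" "i < j" "j < k - 2" "bs ! i = bs ! j"
  shows "omega_hat \<alpha> bs = 0"
proof -
  have "multilin_ext (\<omega> u) bs = 0" for u
    using assms
    by (intro multilin_ext_alternating[of scale _ _ i j]) (simp_all add: C_PA_multider_omega[OF cochain])
  moreover have "\<Phi> (dgen u # dgen v # bs) = 0" for u v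
    using assms two_le_k
    by (intro lr_phi_alternating[OF Phi, of _ "Suc (Suc i)" "Suc (Suc j)"]) (simp_all add: dgen_in_free_mod)
  ultimately show ?thesis by (simp add: omega_hat_def quad_ext_zero_fun)
qed

lemma omega_hat_C_LR: "C_LR scale k \<Phi> omega_hat"
  unfolding C_LR_def
proof (intro conjI allI impI Phi)
  fix \<alpha> \<alpha>' :: "'a \<Rightarrow> 'a" and bs bs' :: "('a \<Rightarrow> 'a) list"
  assume "\<alpha> \<in> free_mod" "\<alpha>' \<in> free_mod" "length bs = k - 2" "set bs \<subseteq> free_mod"
    "set bs' \<subseteq> free_mod" "kaehler_eq scale \<alpha> \<alpha>'" "list_all2 (kaehler_eq scale) bs bs'"
  then show "omega_hat \<alpha> bs = omega_hat \<alpha>' bs'"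
    by (metis list_all2_lengthD omega_hat_kaehler_cong_list omega_hat_kaehler_cong)
next
  fix \<alpha> \<beta> \<gamma> :: "'a \<Rightarrow> 'a" and bs :: "('a \<Rightarrow> 'a) list" and i
  assume "length bs = k - 2" "set bs \<subseteq> free_mod" "i < k - 2" "\<beta> \<in> free_mod" "\<gamma> \<in> free_mod"
  then show "omega_hat \<alpha> (bs[i := fadd \<beta> \<gamma>]) = omega_hat \<alpha> (bs[i := \<beta>]) + omega_hat \<alpha> (bs[i := \<gamma>])"
    by (rule omega_hat_slot_fadd)
next
  fix \<alpha> \<beta> :: "'a \<Rightarrow> 'a" and bs :: "('a \<Rightarrow> 'a) list" and i a
  assume "length bs = k - 2" "set bs \<subseteq> free_mod" "i < k - 2" "\<beta> \<in> free_mod"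
  then show "omega_hat \<alpha> (bs[i := amul a \<beta>]) = a * omega_hat \<alpha> (bs[i := \<beta>])"
    by (rule omega_hat_slot_amul)
next
  fix \<alpha> :: "'a \<Rightarrow> 'a" and bs :: "('a \<Rightarrow> 'a) list" and i j
  assume "length bs = k - 2" "set bs \<subseteq> free_mod" "i < j" "j < k - 2" "bs ! i = bs ! j"
  then show "omega_hat \<alpha> bs = 0"
    by (rule omega_hat_alternating)
next
  fix \<alpha> :: "'a \<Rightarrow> 'a" and c and bs :: "('a \<Rightarrow> 'a) list"
  assume "\<alpha> \<in> free_mod"
  then show "omega_hat (kmul scale c \<alpha>) bs = scale (c ^ 2) (omega_hat \<alpha> bs)"
    by (simp add: kmul_eq_amul omega_hat_amul scale_one_square_mult)
next
  fix \<alpha> :: "'a \<Rightarrow> 'a" and a and bs :: "('a \<Rightarrow> 'a) list"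
  assume "\<alpha> \<in> free_mod"
  then show "omega_hat (amul a \<alpha>) bs = a ^ 2 * omega_hat \<alpha> bs"
    by (rule omega_hat_amul)
next
  fix \<alpha> \<alpha>' :: "'a \<Rightarrow> 'a" and bs :: "('a \<Rightarrow> 'a) list"
  assume "\<alpha> \<in> free_mod" "\<alpha>' \<in> free_mod" "length bs = k - 2" "set bs \<subseteq> free_mod"
  then show "omega_hat (fadd \<alpha> \<alpha>') bs = omega_hat \<alpha> bs + omega_hat \<alpha>' bs + \<Phi> (\<alpha> # \<alpha>' # bs)"
    by (intro omega_hat_fadd)
qed

lemma omega_hat_map_dgen: "omega_hat (dgen u) (map dgen vs) = \<omega> u vs"
  by (simp add: omega_hat_dgen multilin_ext_map_dgen)

end

lemma ex_strict_linear_order: "\<exists>r :: 'a rel. strict_linear_order r"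
proof -
  obtain r :: "'a rel" where wo: "Well_order r" and univ: "Field r = UNIV"
    using well_ordering[where 'a = 'a] by blast
  have "linear_order_on (Field r) r" using wo unfolding well_order_on_def by (rule conjunct1)
  then have "strict_linear_order (r - Id)"
    unfolding univ by (rule strict_linear_order_on_diff_Id)
  then show ?thesis ..
qed

lemma unital_K_algebra_char_two:
  assumes "unital_K_algebra (scale :: 'k::field \<Rightarrow> 'a::comm_ring_1 \<Rightarrow> 'a)" "CHAR('k) = 2"
  shows "(2 :: 'a) = 0"
proof -
  have vs: "vector_space scale" using assms(1) by (simp add: unital_K_algebra_def)
  have "(2 :: 'a) = scale 1 1 + scale 1 1"
    using vector_space.vector_space_assms(4)[OF vs] by simp
  also have "\<dots> = scale (1 + 1) 1"
    by (rule vector_space.vector_space_assms(2)[OF vs, symmetric])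
  also have "(1 :: 'k) + 1 = 0"
    using of_nat_CHAR[where 'a = 'k] assms(2) by simp
  also have "scale 0 (1 :: 'a) = 0"
    using vector_space.vector_space_assms(2)[OF vs, of 0 0 1] by simp
  finally show ?thesis .
qed

theorem mainTheorem14:
  fixes scale :: "'k::field \<Rightarrow> 'a::comm_ring_1 \<Rightarrow> 'a"
    and br :: "'a \<Rightarrow> 'a \<Rightarrow> 'a" and p2 :: "'a \<Rightarrow> 'a"
    and k :: nat
    and \<phi> :: "'a list \<Rightarrow> 'a" and \<omega> :: "'a \<Rightarrow> 'a list \<Rightarrow> 'a"
    and \<Phi> :: "('a \<Rightarrow> 'a) list \<Rightarrow> 'a"
  assumes char2: "CHAR('k) = 2"
    and rpa: "restricted_poisson scale br p2"
    and k2: "k \<ge> 2"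
    and cpa: "C_PA scale k \<phi> \<omega>"
    and Phi: "lr_phi scale k \<Phi>"
    and Phi_d: "\<And>us. length us = k \<Longrightarrow> \<Phi> (map dgen us) = \<phi> us"
  shows "\<exists>W. (C_LR scale k \<Phi> W \<and>
              (\<forall>u vs. length vs = k - 2 \<longrightarrow> W (dgen u) (map dgen vs) = \<omega> u vs)) \<and>
            (\<forall>W'. C_LR scale k \<Phi> W' \<and>
                  (\<forall>u vs. length vs = k - 2 \<longrightarrow> W' (dgen u) (map dgen vs) = \<omega> u vs) \<longrightarrow>
                  (\<forall>\<alpha> bs. \<alpha> \<in> free_mod \<longrightarrow> length bs = k - 2 \<longrightarrow> set bs \<subseteq> free_mod \<longrightarrow>
                     W' \<alpha> bs = W \<alpha> bs))"
proof -
  obtain r :: "'a rel" where r: "strict_linear_order r"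
    using ex_strict_linear_order by blast
  have algebra: "unital_K_algebra scale"
    using rpa unfolding restricted_poisson_def by (rule conjunct1)
  interpret C_PA_lift scale k \<phi> \<omega> \<Phi> r
    using algebra unital_K_algebra_char_two[OF algebra char2] k2 cpa Phi Phi_d r
    by unfold_locales
  show ?thesis
  proof (intro exI[of _ omega_hat] conjI allI impI)
    show "C_LR scale k \<Phi> omega_hat" by (rule omega_hat_C_LR)
  next
    fix u vs
    show "omega_hat (dgen u) (map dgen vs) = \<omega> u vs" by (rule omega_hat_map_dgen)
  next
    fix W' and \<alpha> :: "'a \<Rightarrow> 'a" and bs :: "('a \<Rightarrow> 'a) list"
    assume W': "C_LR scale k \<Phi> W' \<and> (\<forall>u vs. length vs = k - 2 \<longrightarrow> W' (dgen u) (map dgen vs) = \<omega> u vs)"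
      and \<alpha>: "\<alpha> \<in> free_mod" and bs: "length bs = k - 2" "set bs \<subseteq> free_mod"
    show "W' \<alpha> bs = omega_hat \<alpha> bs"
      by (rule C_LR_eqI[OF conjunct1[OF W'] omega_hat_C_LR _ \<alpha> bs])
        (simp add: W' omega_hat_map_dgen)
  qed
qed

end
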